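(* Let $\lambda_0\in(0,1/2)$ and let $\nu$ be uniformly distributed on $[0,\pi]$, $n_1=\cos\nu$, $n_2=\sin\nu$. Then $$E\left[n_2^2n_1\log\left(\frac{1-\frac{4\lambda_0n_1}{1+4\lambda_0^2}}{1+\frac{4\lambda_0n_1}{1+4\lambda_0^2}}\right)\right]=-\lambda_0+\frac43\lambda_0^3.$$
   Context: Here $\log$ is the natural logarithm. *)

theory Defs
  imports "HOL-Analysis.Analysis"
begin

end

theory Submission
  imports Defs
begin

text \<open>With \<open>r = 2 l\<^sub>0\<close> and \<open>a = 2r/(1 + r\<^sup>2)\<close> the integrand is
  \<open>sin\<^sup>2 x cos x (ln (1 - a cos x) - ln (1 + a cos x))\<close>. Integrating by parts against
  \<open>sin\<^sup>3 x / 3\<close> (the boundary term vanishes) leaves \<open>-(2a/3) \<integral> sin\<^sup>4 x / (1 - a\<^sup>2 cos\<^sup>2 x)\<close>.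
  Since \<open>sin\<^sup>4 = (1 - cos\<^sup>2)\<^sup>2\<close>, polynomial division in \<open>cos\<^sup>2\<close> reduces this to
  \<open>\<integral> cos\<^sup>2 = \<pi>/2\<close> and \<open>\<integral> 1/(1 - a\<^sup>2 cos\<^sup>2 x)\<close>; by partial fractions the latter is a sum of two
  Poisson kernels \<open>(1 - r\<^sup>2)/(1 \<mp> 2r cos x + r\<^sup>2)\<close>, each of which has an explicit arctan primitive
  increasing by exactly \<open>\<pi>\<close> on \<open>[0, \<pi>]\<close>.\<close>

lemma one_minus_mult_cos_pos:
  fixes r x :: real
  assumes "\<bar>r\<bar> < 1"
  shows "0 < 1 - r * cos x"
proof -
  have "\<bar>r * cos x\<bar> \<le> \<bar>r\<bar>"
    by (simp add: abs_mult mult_left_le)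
  with assms show ?thesis by linarith
qed

lemma poisson_denominator_eq:
  fixes r x :: real
  shows "1 - 2 * r * cos x + r\<^sup>2 = (1 - r * cos x)\<^sup>2 + (r * sin x)\<^sup>2"
  using sin_cos_squared_add[of x] by algebra

lemma poisson_denominator_pos:
  fixes r x :: real
  assumes "\<bar>r\<bar> < 1"
  shows "0 < 1 - 2 * r * cos x + r\<^sup>2"
  unfolding poisson_denominator_eq
  using one_minus_mult_cos_pos[OF assms, of x] by (simp add: add_pos_nonneg)

text \<open>Unlike the textbook primitive \<open>2 arctan ((1 + r)/(1 - r) tan (x/2))\<close>, this one has no jump at
  \<open>x = \<pi>\<close>: for \<open>\<bar>r\<bar> < 1\<close> it is a primitive of the Poisson kernel on all of \<open>\<real>\<close>.\<close>

definition poisson_primitive :: "real \<Rightarrow> real \<Rightarrow> real" where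
  "poisson_primitive r x = x + 2 * arctan (r * sin x / (1 - r * cos x))"

lemma poisson_primitive_0 [simp]: "poisson_primitive r 0 = 0"
  by (simp add: poisson_primitive_def)

lemma poisson_primitive_pi [simp]: "poisson_primitive r pi = pi"
  by (simp add: poisson_primitive_def)

lemma has_real_derivative_poisson_primitive:
  fixes r x :: real
  assumes "\<bar>r\<bar> < 1"
  shows "(poisson_primitive r has_real_derivative (1 - r\<^sup>2) / (1 - 2 * r * cos x + r\<^sup>2)) (at x)"
proof -
  define d where "d = 1 - r * cos x"
  define D where "D = 1 - 2 * r * cos x + r\<^sup>2"
  have d: "0 < d"
    using one_minus_mult_cos_pos[OF assms] by (simp add: d_def)
  have D: "D = d\<^sup>2 + (r * sin x)\<^sup>2"
    unfolding d_def D_def by (rule poisson_denominator_eq)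
  have D_pos: "0 < D"
    unfolding D_def using assms by (rule poisson_denominator_pos)
  have numer: "cos x * r * d - r * sin x * (sin x * r) = r * cos x - r\<^sup>2"
    using sin_cos_squared_add[of x] unfolding d_def by algebra
  have "(poisson_primitive r has_real_derivative
          1 + 2 * (inverse (1 + (r * sin x / d)\<^sup>2) * (cos x * r * d - r * sin x * (sin x * r)) / (d * d)))
        (at x)"
    unfolding poisson_primitive_def d_def
    using d[unfolded d_def] by (auto intro!: derivative_eq_intros)
  also have "inverse (1 + (r * sin x / d)\<^sup>2) = d\<^sup>2 / D"
    using d unfolding D by (simp add: field_simps)
  also have "d\<^sup>2 / D * (cos x * r * d - r * sin x * (sin x * r)) / (d * d) = (r * cos x - r\<^sup>2) / D"
    using d unfolding numer by (simp add: power2_eq_square)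
  also have "1 + 2 * ((r * cos x - r\<^sup>2) / D) = (D + 2 * (r * cos x - r\<^sup>2)) / D"
    using D_pos by (simp add: field_simps)
  also have "D + 2 * (r * cos x - r\<^sup>2) = 1 - r\<^sup>2"
    by (simp add: D_def)
  finally show ?thesis
    unfolding D_def .
qed

lemma has_real_derivative_inverse_one_minus_sq_cos:
  fixes r a x :: real
  assumes "\<bar>r\<bar> < 1" and a: "a = 2 * r / (1 + r\<^sup>2)"
  shows "((\<lambda>x. (1 + r\<^sup>2) / (2 * (1 - r\<^sup>2)) * (poisson_primitive r x + poisson_primitive (- r) x))
           has_real_derivative 1 / (1 - a\<^sup>2 * (cos x)\<^sup>2)) (at x)"
proof -
  define P where "P = 1 - 2 * r * cos x + r\<^sup>2"
  define Q where "Q = 1 + 2 * r * cos x + r\<^sup>2"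
  have PQ: "0 < P" "0 < Q"
    using poisson_denominator_pos[of r x] poisson_denominator_pos[of "- r" x] assms(1)
    unfolding P_def Q_def by auto
  have R: "0 < 1 + r\<^sup>2" "0 < 1 - r\<^sup>2"
    using assms(1) by (auto intro: add_pos_nonneg simp: abs_square_less_1)
  have prod: "P * Q = (1 + r\<^sup>2)\<^sup>2 * (1 - a\<^sup>2 * (cos x)\<^sup>2)"
    using R unfolding P_def Q_def a by (simp add: field_simps) algebra
  have E: "0 < 1 - a\<^sup>2 * (cos x)\<^sup>2"
    using mult_pos_pos[OF PQ] R unfolding prod by (simp add: zero_less_mult_iff)
  have sum: "P + Q = 2 * (1 + r\<^sup>2)"
    unfolding P_def Q_def by simp
  have "(1 + r\<^sup>2) / (2 * (1 - r\<^sup>2)) * ((1 - r\<^sup>2) / P + (1 - r\<^sup>2) / Q) = (1 + r\<^sup>2) / 2 * (1 / P + 1 / Q)"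
    using R by (simp add: field_simps)
  also have "1 / P + 1 / Q = (P + Q) / (P * Q)"
    using PQ by (simp add: field_simps)
  also have "(1 + r\<^sup>2) / 2 * ((P + Q) / (P * Q)) = 1 / (1 - a\<^sup>2 * (cos x)\<^sup>2)"
  proof -
    have "K / 2 * ((2 * K) / (K\<^sup>2 * E)) = 1 / E" if "K \<noteq> 0" "E \<noteq> 0" for K E :: real
      using that by (simp add: field_simps power2_eq_square)
    from this[of "1 + r\<^sup>2" "1 - a\<^sup>2 * (cos x)\<^sup>2"] show ?thesis
      unfolding prod sum using R E by simp
  qed
  finally have weights: "(1 + r\<^sup>2) / (2 * (1 - r\<^sup>2)) * ((1 - r\<^sup>2) / P + (1 - r\<^sup>2) / Q)
      = 1 / (1 - a\<^sup>2 * (cos x)\<^sup>2)" .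
  have "(poisson_primitive r has_real_derivative (1 - r\<^sup>2) / P) (at x)"
    unfolding P_def using assms(1) by (rule has_real_derivative_poisson_primitive)
  moreover have "(poisson_primitive (- r) has_real_derivative (1 - r\<^sup>2) / Q) (at x)"
    using has_real_derivative_poisson_primitive[of "- r" x] assms(1) unfolding Q_def by simp
  ultimately have "((\<lambda>x. poisson_primitive r x + poisson_primitive (- r) x)
      has_real_derivative (1 - r\<^sup>2) / P + (1 - r\<^sup>2) / Q) (at x)"
    by (rule DERIV_add)
  then show ?thesis
    unfolding weights[symmetric] by (rule DERIV_cmult)
qed

lemma sin_pow4_eq:
  fixes a x :: real
  assumes "a \<noteq> 0"
  shows "sin x ^ 4 = (1 - a\<^sup>2 * (cos x)\<^sup>2) * ((2 * a\<^sup>2 - 1) / a ^ 4 - (cos x)\<^sup>2 / a\<^sup>2) + (1 - a\<^sup>2)\<^sup>2 / a ^ 4"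
proof -
  have "sin x ^ 4 = ((sin x)\<^sup>2)\<^sup>2"
    by simp
  also have "\<dots> = (1 - (cos x)\<^sup>2)\<^sup>2"
    by (simp add: sin_squared_eq)
  also have "\<dots> = (1 - a\<^sup>2 * (cos x)\<^sup>2) * ((2 * a\<^sup>2 - 1) / a ^ 4 - (cos x)\<^sup>2 / a\<^sup>2) + (1 - a\<^sup>2)\<^sup>2 / a ^ 4"
    using assms by (simp add: field_simps) algebra
  finally show ?thesis .
qed

lemma has_real_derivative_sin_pow4_div:
  fixes a x :: real and G :: "real \<Rightarrow> real"
  assumes "a \<noteq> 0" "\<bar>a\<bar> < 1"
    and G: "\<And>x. (G has_real_derivative 1 / (1 - a\<^sup>2 * (cos x)\<^sup>2)) (at x)"
  shows "((\<lambda>x. (2 * a\<^sup>2 - 1) / a ^ 4 * x - (x + sin x * cos x) / (2 * a\<^sup>2) + (1 - a\<^sup>2)\<^sup>2 / a ^ 4 * G x)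
           has_real_derivative sin x ^ 4 / (1 - a\<^sup>2 * (cos x)\<^sup>2)) (at x)"
proof -
  have "a\<^sup>2 * (cos x)\<^sup>2 \<le> a\<^sup>2"
    by (intro mult_left_le) (simp_all add: abs_square_le_1)
  moreover have "a\<^sup>2 < 1"
    using assms(2) by (simp add: abs_square_less_1)
  ultimately have E: "0 < 1 - a\<^sup>2 * (cos x)\<^sup>2"
    by linarith
  have "((\<lambda>x. x + sin x * cos x) has_real_derivative 2 * (cos x)\<^sup>2) (at x)"
    using sin_cos_squared_add3[of x] by (auto intro!: derivative_eq_intros simp: power2_eq_square algebra_simps)
  then have "((\<lambda>x. (2 * a\<^sup>2 - 1) / a ^ 4 * x - (x + sin x * cos x) / (2 * a\<^sup>2) + (1 - a\<^sup>2)\<^sup>2 / a ^ 4 * G x)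
      has_real_derivative (2 * a\<^sup>2 - 1) / a ^ 4 * 1 - 2 * (cos x)\<^sup>2 / (2 * a\<^sup>2)
        + (1 - a\<^sup>2)\<^sup>2 / a ^ 4 * (1 / (1 - a\<^sup>2 * (cos x)\<^sup>2))) (at x)"
    by (intro DERIV_add DERIV_diff DERIV_cmult DERIV_cdivide DERIV_ident G)
  also have "(2 * a\<^sup>2 - 1) / a ^ 4 * 1 - 2 * (cos x)\<^sup>2 / (2 * a\<^sup>2)
        + (1 - a\<^sup>2)\<^sup>2 / a ^ 4 * (1 / (1 - a\<^sup>2 * (cos x)\<^sup>2))
      = ((1 - a\<^sup>2 * (cos x)\<^sup>2) * ((2 * a\<^sup>2 - 1) / a ^ 4 - (cos x)\<^sup>2 / a\<^sup>2) + (1 - a\<^sup>2)\<^sup>2 / a ^ 4)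
        / (1 - a\<^sup>2 * (cos x)\<^sup>2)"
    using E by (simp add: add_divide_distrib)
  also have "\<dots> = sin x ^ 4 / (1 - a\<^sup>2 * (cos x)\<^sup>2)"
    unfolding sin_pow4_eq[OF assms(1), of x] ..
  finally show ?thesis .
qed

lemma has_real_derivative_ln_ratio_cos:
  fixes a x :: real
  assumes "\<bar>a\<bar> < 1"
  shows "((\<lambda>x. ln ((1 - a * cos x) / (1 + a * cos x)))
           has_real_derivative 2 * a * sin x / (1 - a\<^sup>2 * (cos x)\<^sup>2)) (at x)"
proof -
  have pos: "0 < 1 - a * cos y" "0 < 1 + a * cos y" for y
    using one_minus_mult_cos_pos[of a y] one_minus_mult_cos_pos[of "- a" y] assms by auto
  have "(\<lambda>x. ln ((1 - a * cos x) / (1 + a * cos x))) = (\<lambda>x. ln (1 - a * cos x) - ln (1 + a * cos x))"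
    by (intro ext ln_divide_pos pos)
  moreover have "((\<lambda>x. ln (1 - a * cos x) - ln (1 + a * cos x))
      has_real_derivative a * sin x / (1 - a * cos x) + a * sin x / (1 + a * cos x)) (at x)"
    using pos[of x] by (auto intro!: derivative_eq_intros simp: mult.commute)
  moreover have "a * sin x / (1 - a * cos x) + a * sin x / (1 + a * cos x) = 2 * a * sin x / (1 - a\<^sup>2 * (cos x)\<^sup>2)"
    using pos[of x] by (simp add: field_simps power2_eq_square)
  ultimately show ?thesis
    by simp
qed

lemma has_real_derivative_sin_pow3_ln_ratio_cos:
  fixes a x :: real
  assumes "\<bar>a\<bar> < 1"
  shows "((\<lambda>x. sin x ^ 3 / 3 * ln ((1 - a * cos x) / (1 + a * cos x)))
           has_real_derivative (sin x)\<^sup>2 * cos x * ln ((1 - a * cos x) / (1 + a * cos x))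
             + 2 * a / 3 * (sin x ^ 4 / (1 - a\<^sup>2 * (cos x)\<^sup>2))) (at x)"
proof -
  have "((\<lambda>x. sin x ^ 3 / 3) has_real_derivative (sin x)\<^sup>2 * cos x) (at x)"
    by (auto intro!: derivative_eq_intros)
  from DERIV_mult[OF this has_real_derivative_ln_ratio_cos[OF assms]]
  show ?thesis
    by (simp add: eval_nat_numeral mult_ac)
qed

lemma has_real_derivative_primitive_sin_sq_cos_ln_ratio_cos:
  fixes a x :: real and G :: "real \<Rightarrow> real"
  assumes "a \<noteq> 0" "\<bar>a\<bar> < 1"
    and G: "\<And>x. (G has_real_derivative 1 / (1 - a\<^sup>2 * (cos x)\<^sup>2)) (at x)"
  shows "((\<lambda>x. sin x ^ 3 / 3 * ln ((1 - a * cos x) / (1 + a * cos x))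
              - 2 * a / 3 * ((2 * a\<^sup>2 - 1) / a ^ 4 * x - (x + sin x * cos x) / (2 * a\<^sup>2)
                             + (1 - a\<^sup>2)\<^sup>2 / a ^ 4 * G x))
           has_real_derivative (sin x)\<^sup>2 * cos x * ln ((1 - a * cos x) / (1 + a * cos x))) (at x)"
proof -
  have "((\<lambda>x. (2 * a\<^sup>2 - 1) / a ^ 4 * x - (x + sin x * cos x) / (2 * a\<^sup>2) + (1 - a\<^sup>2)\<^sup>2 / a ^ 4 * G x)
      has_real_derivative sin x ^ 4 / (1 - a\<^sup>2 * (cos x)\<^sup>2)) (at x)"
    by (rule has_real_derivative_sin_pow4_div[OF assms])
  from DERIV_diff[OF has_real_derivative_sin_pow3_ln_ratio_cos[OF assms(2)] DERIV_cmult[OF this, of "2 * a / 3"]]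
  show ?thesis
    by simp
qed

lemma sin_sq_cos_ln_ratio_cos_integral_value:
  fixes r :: real
  assumes "0 < r" "r < 1"
  defines "a \<equiv> 2 * r / (1 + r\<^sup>2)"
  shows "- 2 * a / 3 * ((2 * a\<^sup>2 - 1) / a ^ 4 - 1 / (2 * a\<^sup>2)
           + (1 - a\<^sup>2)\<^sup>2 / a ^ 4 * ((1 + r\<^sup>2) / (1 - r\<^sup>2)))
         = - r / 2 + r ^ 3 / 6"
proof -
  define K where "K = 1 + r\<^sup>2"
  have "r\<^sup>2 < 1"
    using assms(1,2) by (simp add: abs_square_less_1)
  then have K: "0 < K" "1 - r\<^sup>2 \<noteq> 0"
    by (auto simp: K_def add_pos_nonneg)
  have a: "a = 2 * r / K"
    by (simp add: a_def K_def)
  have one_minus_a2: "1 - a\<^sup>2 = (1 - r\<^sup>2)\<^sup>2 / K\<^sup>2"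
    using K unfolding a by (simp add: field_simps) (simp add: K_def power2_eq_square algebra_simps)
  have a4: "a ^ 4 = 16 * r ^ 4 / K ^ 4"
    unfolding a by (simp add: power_divide)
  have Y: "(1 - a\<^sup>2)\<^sup>2 / a ^ 4 * (K / (1 - r\<^sup>2)) = (1 - r\<^sup>2) ^ 3 * K / (16 * r ^ 4)"
    unfolding one_minus_a2 a4 using K assms(1) by (simp add: field_simps eval_nat_numeral)
  have X: "(2 * a\<^sup>2 - 1) / a ^ 4 - 1 / (2 * a\<^sup>2) = (6 * r\<^sup>2 * K\<^sup>2 - K ^ 4) / (16 * r ^ 4)"
    using K assms(1) unfolding a by (simp add: field_simps eval_nat_numeral)
  have "- 2 * a / 3 * ((2 * a\<^sup>2 - 1) / a ^ 4 - 1 / (2 * a\<^sup>2) + (1 - a\<^sup>2)\<^sup>2 / a ^ 4 * (K / (1 - r\<^sup>2)))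
      = - (4 * r) / (3 * K) * ((6 * r\<^sup>2 * K\<^sup>2 - K ^ 4 + (1 - r\<^sup>2) ^ 3 * K) / (16 * r ^ 4))"
    unfolding X Y unfolding a by (simp add: add_divide_distrib)
  also have "\<dots> = - (6 * r\<^sup>2 * K - K ^ 3 + (1 - r\<^sup>2) ^ 3) / (12 * r ^ 3)"
    using K assms(1) by (simp add: field_simps eval_nat_numeral)
  also have "\<dots> = - r / 2 + r ^ 3 / 6"
    using assms(1) unfolding K_def by (simp add: field_simps) algebra
  finally show ?thesis
    unfolding K_def .
qed

lemma has_integral_sin_sq_cos_ln_ratio_cos:
  fixes r :: real
  assumes "0 < r" "r < 1"
  defines "a \<equiv> 2 * r / (1 + r\<^sup>2)"
  shows "((\<lambda>x. (sin x)\<^sup>2 * cos x * ln ((1 - a * cos x) / (1 + a * cos x)))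
           has_integral pi * (- r / 2 + r ^ 3 / 6)) {0..pi}"
proof -
  define G where "G x = (1 + r\<^sup>2) / (2 * (1 - r\<^sup>2)) * (poisson_primitive r x + poisson_primitive (- r) x)" for x
  define S where "S x = (2 * a\<^sup>2 - 1) / a ^ 4 * x - (x + sin x * cos x) / (2 * a\<^sup>2) + (1 - a\<^sup>2)\<^sup>2 / a ^ 4 * G x" for x
  define F where "F x = sin x ^ 3 / 3 * ln ((1 - a * cos x) / (1 + a * cos x)) - 2 * a / 3 * S x" for x
  have "r\<^sup>2 < 1"
    using assms(1,2) by (simp add: abs_square_less_1)
  have "0 < (1 - r)\<^sup>2"
    using assms(2) by simp
  then have "2 * r < 1 + r\<^sup>2"
    by (simp add: power2_diff)
  then have a: "0 < a" "a < 1"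
    using assms(1) by (simp_all add: a_def add_pos_nonneg)
  have "(G has_real_derivative 1 / (1 - a\<^sup>2 * (cos x)\<^sup>2)) (at x)" for x
    unfolding G_def[abs_def] a_def using assms(1,2) by (intro has_real_derivative_inverse_one_minus_sq_cos) simp_all
  then have "(F has_real_derivative (sin x)\<^sup>2 * cos x * ln ((1 - a * cos x) / (1 + a * cos x))) (at x)" for x
    unfolding F_def[abs_def] S_def using a by (intro has_real_derivative_primitive_sin_sq_cos_ln_ratio_cos) auto
  then have ftc: "((\<lambda>x. (sin x)\<^sup>2 * cos x * ln ((1 - a * cos x) / (1 + a * cos x))) has_integral F pi - F 0) {0..pi}"
    by (intro fundamental_theorem_of_calculus)
      (auto simp: has_real_derivative_iff_has_vector_derivative[symmetric] intro: has_field_derivative_at_within)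
  have G_ends: "G 0 = 0" "G pi = pi * ((1 + r\<^sup>2) / (1 - r\<^sup>2))"
    using \<open>r\<^sup>2 < 1\<close> by (simp_all add: G_def field_simps)
  have "F pi - F 0 = - 2 * a / 3 * ((2 * a\<^sup>2 - 1) / a ^ 4 * pi - pi / (2 * a\<^sup>2)
      + (1 - a\<^sup>2)\<^sup>2 / a ^ 4 * (pi * ((1 + r\<^sup>2) / (1 - r\<^sup>2))))"
    by (simp add: F_def S_def G_ends)
  also have "\<dots> = pi * (- 2 * a / 3 * ((2 * a\<^sup>2 - 1) / a ^ 4 - 1 / (2 * a\<^sup>2)
      + (1 - a\<^sup>2)\<^sup>2 / a ^ 4 * ((1 + r\<^sup>2) / (1 - r\<^sup>2))))"
    by (simp add: algebra_simps)
  finally show ?thesis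
    using ftc unfolding a_def sin_sq_cos_ln_ratio_cos_integral_value[OF assms(1,2)] by simp
qed

theorem lemma7:
  fixes l0 :: real
  assumes "0 < l0" and "l0 < 1/2"
  shows "(1 / pi) * integral {0..pi}
           (\<lambda>\<nu>. (sin \<nu>)\<^sup>2 * cos \<nu> *
              ln ((1 - 4 * l0 * cos \<nu> / (1 + 4 * l0\<^sup>2)) /
                  (1 + 4 * l0 * cos \<nu> / (1 + 4 * l0\<^sup>2))))
         = - l0 + 4/3 * l0 ^ 3"
proof -
  have "4 * l0 * cos \<nu> / (1 + 4 * l0\<^sup>2) = 2 * (2 * l0) / (1 + (2 * l0)\<^sup>2) * cos \<nu>" for \<nu>
    by (simp add: power2_eq_square)
  moreover have "0 < 2 * l0" "2 * l0 < 1"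
    using assms by simp_all
  ultimately show ?thesis
    using integral_unique[OF has_integral_sin_sq_cos_ln_ratio_cos[of "2 * l0"]] by simp
qed

end
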